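(* For every state $\rho\in\mathsf{St}(S)$, $$\max_{\mathcal E\in\mathsf{EPC}}\ \min_{\tau\in\mathsf P(S)}\frac{\langle\phi_+|\mathcal E(\rho)|\phi_+\rangle}{\langle\phi_+|\mathcal E(\tau)|\phi_+\rangle}=d\,\max_{\mathcal E\in\mathsf{EPC}}\langle\phi_+|\mathcal E(\rho)|\phi_+\rangle=2^{R^{\rm coh}_{\max}(\rho)}.$$
   Context: $S$ is a $d$-dimensional quantum system with non-degenerate Hamiltonian $H=\sum_i E_i|i\rangle\langle i|$, $E_1<\dots<E_d$. $\mathsf{St}(S)$ is the set of density matrices; $\mathsf P(S)$ is the set of passive states, i.e. states $\sum_ip_i|i\rangle\langle i|$ with $p_1\ge\dots\ge p_d$. $|\phi_+\rangle=\frac1{\sqrt d}\sum_{i=1}^d|i\rangle$. $\mathsf{EPC}$ is the set of energy-preserving channels: CPTP maps $\mathcal E$ with $\langle i|\mathcal E(\rho)|i\rangle=\langle i|\rho|i\rangle$ for all $\rho$ and $i$. $D_{\max}(A\|B)=\min\{s\ge0:A\le2^sB\}$, and the max relative entropy of coherence is $R^{\rm coh}_{\max}(\rho)=\min\{D_{\max}(\rho\|\gamma):\gamma\in\mathsf{St}(S),\ [\gamma,H]=0\}$ (log base 2). *)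

theory Defs
  imports "HOL-Analysis.Analysis"
begin

text \<open>Operators on the d-dimensional system S are complex d x d matrices indexed by a finite
  type 'n (d = CARD('n)); the energy eigenbasis is the standard basis, and the Hamiltonian is
  H = diag(En) with En injective (non-degenerate spectrum).\<close>

type_synonym 'n op = "complex^'n^'n"

definition mscale :: "complex \<Rightarrow> 'n::finite op \<Rightarrow> 'n op" where
  "mscale c A = (\<chi> i j. c * A$i$j)"

definition hermitian :: "'n::finite op \<Rightarrow> bool" where
  "hermitian A \<longleftrightarrow> (\<forall>i j. A$i$j = cnj (A$j$i))"

definition psd :: "'n::finite op \<Rightarrow> bool" where
  "psd A \<longleftrightarrow> hermitian A \<and>
     (\<forall>x::complex^'n. 0 \<le> Re (\<Sum>i\<in>UNIV. \<Sum>j\<in>UNIV. cnj (x$i) * A$i$j * x$j))"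

definition trace :: "'n::finite op \<Rightarrow> complex" where
  "trace A = (\<Sum>i\<in>UNIV. A$i$i)"

definition density :: "'n::finite op \<Rightarrow> bool" where
  "density A \<longleftrightarrow> psd A \<and> trace A = 1"

definition hamiltonian :: "('n::finite \<Rightarrow> real) \<Rightarrow> 'n op" where
  "hamiltonian En = (\<chi> i j. if i = j then complex_of_real (En i) else 0)"

definition passive_state :: "('n::finite \<Rightarrow> real) \<Rightarrow> 'n op \<Rightarrow> bool" where
  "passive_state En A \<longleftrightarrow> density A \<and> (\<forall>i j. i \<noteq> j \<longrightarrow> A$i$j = 0) \<and>
     (\<forall>i j. En i < En j \<longrightarrow> Re (A$j$j) \<le> Re (A$i$i))"

definition clinear_map :: "('n::finite op \<Rightarrow> 'n op) \<Rightarrow> bool" where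
  "clinear_map E \<longleftrightarrow> (\<forall>A B. E (A + B) = E A + E B) \<and> (\<forall>c A. E (mscale c A) = mscale c (E A))"

text \<open>Positive semidefiniteness of an operator on C^k (x) C^d, given as a function on
  index pairs (a,i) with a < k.\<close>
definition ext_psd :: "nat \<Rightarrow> (nat \<times> 'n::finite \<Rightarrow> nat \<times> 'n \<Rightarrow> complex) \<Rightarrow> bool" where
  "ext_psd k M \<longleftrightarrow>
     (\<forall>p\<in>{..<k} \<times> (UNIV::'n set). \<forall>q\<in>{..<k} \<times> (UNIV::'n set). M p q = cnj (M q p)) \<and>
     (\<forall>x :: nat \<times> 'n \<Rightarrow> complex.
        0 \<le> Re (\<Sum>p\<in>{..<k} \<times> (UNIV::'n set). \<Sum>q\<in>{..<k} \<times> (UNIV::'n set). cnj (x p) * M p q * x q))"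

text \<open>(id_k \<otimes> E) applied blockwise.\<close>
definition ext_map :: "('n::finite op \<Rightarrow> 'n op) \<Rightarrow> (nat \<times> 'n \<Rightarrow> nat \<times> 'n \<Rightarrow> complex)
    \<Rightarrow> (nat \<times> 'n \<Rightarrow> nat \<times> 'n \<Rightarrow> complex)" where
  "ext_map E M = (\<lambda>p q. E (\<chi> i j. M (fst p, i) (fst q, j)) $ snd p $ snd q)"

definition completely_positive :: "('n::finite op \<Rightarrow> 'n op) \<Rightarrow> bool" where
  "completely_positive E \<longleftrightarrow> (\<forall>k M. ext_psd k M \<longrightarrow> ext_psd k (ext_map E M))"

definition trace_preserving :: "('n::finite op \<Rightarrow> 'n op) \<Rightarrow> bool" where
  "trace_preserving E \<longleftrightarrow> (\<forall>A. trace (E A) = trace A)"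

definition CPTP :: "('n::finite op \<Rightarrow> 'n op) \<Rightarrow> bool" where
  "CPTP E \<longleftrightarrow> clinear_map E \<and> completely_positive E \<and> trace_preserving E"

definition EPC :: "('n::finite op \<Rightarrow> 'n op) set" where
  "EPC = {E. CPTP E \<and> (\<forall>\<rho> i. density \<rho> \<longrightarrow> E \<rho> $ i $ i = \<rho> $ i $ i)}"

text \<open>\<langle>phi_+|A|phi_+\<rangle> with phi_+ = d^(-1/2) \<Sum>_i |i\<rangle>.\<close>
definition phi_plus_exp :: "'n::finite op \<Rightarrow> complex" where
  "phi_plus_exp A = (\<Sum>i\<in>UNIV. \<Sum>j\<in>UNIV. A$i$j) / of_nat CARD('n)"

text \<open>Max relative entropy (value \<infinity> when no s works), and max relative entropy of coherence.\<close>
definition Dmax :: "'n::finite op \<Rightarrow> 'n op \<Rightarrow> ereal" where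
  "Dmax A B = Inf {ereal s | s. 0 \<le> s \<and> psd (mscale (complex_of_real (2 powr s)) B - A)}"

definition Rcoh_max :: "('n::finite \<Rightarrow> real) \<Rightarrow> 'n op \<Rightarrow> ereal" where
  "Rcoh_max En \<rho> = Inf {Dmax \<rho> \<gamma> | \<gamma>. density \<gamma> \<and> \<gamma> ** hamiltonian En = hamiltonian En ** \<gamma>}"

definition is_max :: "real set \<Rightarrow> real \<Rightarrow> bool" where
  "is_max A v \<longleftrightarrow> v \<in> A \<and> (\<forall>a\<in>A. a \<le> v)"

definition is_min :: "real set \<Rightarrow> real \<Rightarrow> bool" where
  "is_min A v \<longleftrightarrow> v \<in> A \<and> (\<forall>a\<in>A. v \<le> a)"

end

theory Submission imports Defs
begin

text \<open>Energy-preserving channels fix every diagonal matrix: positivity of \<open>E |k\<rangle>\<langle>k|\<close>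
  together with its prescribed diagonal forces its off-diagonal entries to vanish.  Hence
  they fix passive states, \<open>\<langle>\<phi>+|E \<tau>|\<phi>+\<rangle> = 1/d\<close>, and both optimisations reduce to
  maximising the entry sum \<open>d \<langle>\<phi>+|E \<rho>|\<phi>+\<rangle>\<close> over energy-preserving channels.
  For a non-degenerate Hamiltonian the free states are the diagonal ones, so
  \<open>2 ^ R_max(\<rho>)\<close> is the value \<open>t\<close> of the semidefinite program
  \<open>min {tr \<Lambda> | \<Lambda> diagonal, \<Lambda> \<ge> \<rho>}\<close>.  Weak duality: \<open>E (\<Lambda> - \<rho>) = \<Lambda> - E \<rho> \<ge> 0\<close>,
  so the entry sum of \<open>E \<rho>\<close> is at most \<open>tr \<Lambda>\<close>.  Strong duality: separating the convex set
  \<open>{(tr \<Lambda>, \<Lambda> - \<rho> - P + K) | P \<ge> 0, K anti-hermitian}\<close> from the ray \<open>{(s, 0) | s < t}\<close>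
  yields a hermitian \<open>W\<close> with unit diagonal, nonnegative against positive matrices, with
  \<open>\<langle>W, \<rho>\<rangle> \<ge> t\<close>; by the Schur product theorem the entrywise multiplier by \<open>cnj W\<close> is
  an energy-preserving channel attaining \<open>t\<close>.\<close>

lemma op_eqI: "(\<And>i j. (A::'n::finite op)$i$j = B$i$j) \<Longrightarrow> A = B"
  by (simp add: vec_eq_iff)

lemma sum_UNIV_single:
  fixes f :: "'n::finite \<Rightarrow> 'b::comm_monoid_add"
  assumes "\<And>k. k \<noteq> i \<Longrightarrow> f k = 0"
  shows "sum f UNIV = f i"
proof -
  have "sum f UNIV = sum f {i}"
    by (rule sum.mono_neutral_right) (auto intro: assms)
  then show ?thesis by simp
qed

lemma sum_UNIV_two:
  fixes f :: "'n::finite \<Rightarrow> 'b::comm_monoid_add"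
  assumes "i \<noteq> j" "\<And>k. k \<noteq> i \<Longrightarrow> k \<noteq> j \<Longrightarrow> f k = 0"
  shows "sum f UNIV = f i + f j"
proof -
  have "sum f UNIV = sum f {i,j}"
    by (rule sum.mono_neutral_right) (auto intro: assms(2))
  also have "\<dots> = f i + f j" using assms(1) by simp
  finally show ?thesis .
qed

definition quad_form :: "'n::finite op \<Rightarrow> complex^'n \<Rightarrow> complex" where
  "quad_form A x = (\<Sum>i\<in>UNIV. \<Sum>j\<in>UNIV. cnj (x$i) * A$i$j * x$j)"

definition diag_mat :: "('n::finite \<Rightarrow> complex) \<Rightarrow> 'n op" where
  "diag_mat c = (\<chi> i j. if i = j then c i else 0)"

definition real_diag :: "('n::finite \<Rightarrow> real) \<Rightarrow> 'n op" where
  "real_diag l = diag_mat (\<lambda>i. complex_of_real (l i))"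

definition entry_sum :: "'n::finite op \<Rightarrow> complex" where
  "entry_sum A = (\<Sum>i\<in>UNIV. \<Sum>j\<in>UNIV. A$i$j)"

definition anti_hermitian :: "'n::finite op \<Rightarrow> bool" where
  "anti_hermitian K \<longleftrightarrow> (\<forall>i j. K$i$j = - cnj (K$j$i))"

definition adjoint :: "'n::finite op \<Rightarrow> 'n op" where
  "adjoint A = (\<chi> i j. cnj (A$j$i))"

lemma diag_mat_nth [simp]: "diag_mat c $ i $ j = (if i = j then c i else 0)"
  by (simp add: diag_mat_def)

lemma adjoint_nth [simp]: "adjoint A $ i $ j = cnj (A$j$i)"
  by (simp add: adjoint_def)

lemma scaleR_op_nth: "(c *\<^sub>R A)$i$j = of_real c * (A$i$j :: complex)"
  by (simp only: vector_scaleR_component) (simp add: scaleR_conv_of_real)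

lemma psd_iff_quad_form: "psd A \<longleftrightarrow> hermitian A \<and> (\<forall>x. 0 \<le> Re (quad_form A x))"
  unfolding psd_def quad_form_def by simp

lemma quad_form_add: "quad_form (A + B) x = quad_form A x + quad_form B x"
  unfolding quad_form_def by (simp add: distrib_left distrib_right sum.distrib)

lemma quad_form_scaleR: "quad_form (c *\<^sub>R A) x = of_real c * quad_form A x"
  unfolding quad_form_def scaleR_op_nth by (simp add: sum_distrib_left algebra_simps)

lemma quad_form_basis: "quad_form A (\<chi> k. if k = i then 1 else 0) = A$i$i"
proof -
  let ?x = "(\<chi> k. if k = i then 1 else 0) :: complex^'a"
  have row: "(\<Sum>l\<in>UNIV. cnj (?x$k) * A$k$l * ?x$l) = cnj (?x$k) * A$k$i" for k
    using sum_UNIV_single[where i=i and f="\<lambda>l. cnj (?x$k) * A$k$l * ?x$l"] by auto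
  have "quad_form A ?x = (\<Sum>k\<in>UNIV. cnj (?x$k) * A$k$i)"
    unfolding quad_form_def by (simp only: row)
  also have "\<dots> = A$i$i" using sum_UNIV_single[where i=i and f="\<lambda>k. cnj (?x$k) * A$k$i"] by auto
  finally show ?thesis .
qed

lemma quad_form_two:
  assumes "i \<noteq> j"
  shows "quad_form A (\<chi> k. if k = i then u else if k = j then v else 0)
    = cnj u * A$i$i * u + cnj u * A$i$j * v + cnj v * A$j$i * u + cnj v * A$j$j * v"
proof -
  let ?x = "(\<chi> k. if k = i then u else if k = j then v else 0) :: complex^'a"
  have row: "(\<Sum>l\<in>UNIV. cnj (?x$k) * A$k$l * ?x$l) = cnj (?x$k) * A$k$i * u + cnj (?x$k) * A$k$j * v" for k
    using sum_UNIV_two[OF assms, where f="\<lambda>l. cnj (?x$k) * A$k$l * ?x$l"] assms by auto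
  have "quad_form A ?x = (\<Sum>k\<in>UNIV. cnj (?x$k) * A$k$i * u + cnj (?x$k) * A$k$j * v)"
    unfolding quad_form_def by (simp only: row)
  also have "\<dots> = (cnj u * A$i$i * u + cnj u * A$i$j * v) + (cnj v * A$j$i * u + cnj v * A$j$j * v)"
    by (subst sum_UNIV_two[OF assms]) (simp_all add: assms not_sym[OF assms])
  finally show ?thesis by (simp add: algebra_simps)
qed

lemma quad_form_diag_mat: "quad_form (diag_mat c) x = (\<Sum>i\<in>UNIV. cnj (x$i) * c i * x$i)"
proof -
  have "(\<Sum>j\<in>UNIV. cnj (x$i) * diag_mat c $ i $ j * x$j) = cnj (x$i) * c i * x$i" for i
    by (rule trans[OF sum_UNIV_single[where i=i]]) auto
  thus ?thesis unfolding quad_form_def by simp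
qed

lemma entry_sum_eq_quad_form: "entry_sum A = quad_form A (\<chi> i. 1)"
  unfolding quad_form_def entry_sum_def by simp

lemma entry_sum_diff: "entry_sum (A - B) = entry_sum A - entry_sum B"
  unfolding entry_sum_def by (simp add: sum_subtractf)

lemma entry_sum_diag_mat: "entry_sum (diag_mat c) = sum c UNIV"
proof -
  have "(\<Sum>j\<in>UNIV. diag_mat c $ i $ j) = c i" for i
    by (rule trans[OF sum_UNIV_single[where i=i]]) auto
  thus ?thesis unfolding entry_sum_def by simp
qed

lemma trace_diag_mat: "trace (diag_mat c) = sum c UNIV"
  unfolding trace_def by simp

lemma inner_op: "inner (Y::'n::finite op) M = (\<Sum>i\<in>UNIV. \<Sum>j\<in>UNIV. Re (cnj (Y$i$j) * M$i$j))"
  unfolding inner_vec_def inner_complex_def by simp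

lemma inner_real_diag: "inner (Y::'n::finite op) (real_diag l) = (\<Sum>i\<in>UNIV. l i * Re (Y$i$i))"
proof -
  have "(\<Sum>j\<in>UNIV. Re (cnj (Y$i$j) * real_diag l $i$j)) = l i * Re (Y$i$i)" for i
    by (rule trans[OF sum_UNIV_single[where i=i]]) (simp_all add: real_diag_def)
  thus ?thesis unfolding inner_op by simp
qed

lemma real_diag_zero: "real_diag (\<lambda>_. 0) = 0"
  unfolding real_diag_def by (intro op_eqI) simp

lemma hermitian_nth: "hermitian A \<Longrightarrow> A$i$j = cnj (A$j$i)"
  unfolding hermitian_def by blast

lemma anti_hermitian_nth: "anti_hermitian A \<Longrightarrow> A$i$j = - cnj (A$j$i)"
  unfolding anti_hermitian_def by blast

lemma hermitian_diag_real: "hermitian A \<Longrightarrow> A$i$i = complex_of_real (Re (A$i$i))"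
  using hermitian_nth[of A i i] by (simp add: complex_eq_iff)

lemma hermitian_add: assumes "hermitian A" "hermitian B" shows "hermitian (A + B)"
  unfolding hermitian_def
proof (intro allI)
  fix i j
  have "A$i$j = cnj (A$j$i)" "B$i$j = cnj (B$j$i)" using assms hermitian_nth by blast+
  thus "(A + B)$i$j = cnj ((A + B)$j$i)" by (simp only: vector_add_component complex_cnj_add)
qed

lemma hermitian_diff: assumes "hermitian A" "hermitian B" shows "hermitian (A - B)"
  unfolding hermitian_def
proof (intro allI)
  fix i j
  have "A$i$j = cnj (A$j$i)" "B$i$j = cnj (B$j$i)" using assms hermitian_nth by blast+
  thus "(A - B)$i$j = cnj ((A - B)$j$i)" by (simp only: vector_minus_component complex_cnj_diff)
qed

lemma hermitian_uminus: assumes "hermitian A" shows "hermitian (- A)"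
  unfolding hermitian_def
proof (intro allI)
  fix i j
  have "A$i$j = cnj (A$j$i)" using assms hermitian_nth by blast
  thus "(- A)$i$j = cnj ((- A)$j$i)" by (simp only: vector_uminus_component complex_cnj_minus)
qed

lemma hermitian_scaleR: assumes "hermitian A" shows "hermitian (c *\<^sub>R A)"
  unfolding hermitian_def
proof (intro allI)
  fix i j
  have "A$i$j = cnj (A$j$i)" using assms hermitian_nth by blast
  thus "(c *\<^sub>R A)$i$j = cnj ((c *\<^sub>R A)$j$i)"
    by (simp only: scaleR_op_nth complex_cnj_mult complex_cnj_complex_of_real)
qed

lemma hermitian_real_diag: "hermitian (real_diag l)"
  unfolding hermitian_def real_diag_def by simp

lemma anti_hermitian_add:
  assumes "anti_hermitian A" "anti_hermitian B" shows "anti_hermitian (A + B)"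
  unfolding anti_hermitian_def
proof (intro allI)
  fix i j
  have "A$i$j = - cnj (A$j$i)" "B$i$j = - cnj (B$j$i)" using assms anti_hermitian_nth by blast+
  thus "(A + B)$i$j = - cnj ((A + B)$j$i)"
    by (simp only: vector_add_component complex_cnj_add minus_add_distrib)
qed

lemma anti_hermitian_scaleR: assumes "anti_hermitian A" shows "anti_hermitian (c *\<^sub>R A)"
  unfolding anti_hermitian_def
proof (intro allI)
  fix i j
  have "A$i$j = - cnj (A$j$i)" using assms anti_hermitian_nth by blast
  thus "(c *\<^sub>R A)$i$j = - cnj ((c *\<^sub>R A)$j$i)"
    by (simp only: scaleR_op_nth complex_cnj_mult complex_cnj_complex_of_real mult_minus_right)
qed

lemma anti_hermitian_zero: "anti_hermitian 0"
  unfolding anti_hermitian_def by simp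

lemma hermitian_anti_hermitian_eq_0:
  assumes "hermitian K" "anti_hermitian K" shows "K = 0"
proof (rule op_eqI)
  fix i j
  have "K$i$j = cnj (K$j$i)" "K$i$j = - cnj (K$j$i)"
    using assms hermitian_nth anti_hermitian_nth by blast+
  moreover have "\<forall>a c::complex. a = c \<longrightarrow> a = - c \<longrightarrow> a = 0" by auto
  ultimately show "K$i$j = 0$i$j" by (metis zero_index)
qed

lemma inner_adjoint_anti_hermitian:
  assumes "anti_hermitian K" shows "inner (adjoint W) K = - inner W (K::'n::finite op)"
proof -
  have t: "Re (cnj (adjoint W $ i $ j) * K$i$j) = - Re (cnj (W$j$i) * K$j$i)" for i j
    using anti_hermitian_nth[OF assms, of i j] by simp
  have "inner (adjoint W) K = (\<Sum>i\<in>UNIV. \<Sum>j\<in>UNIV. - Re (cnj (W$j$i) * K$j$i))"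
    unfolding inner_op t ..
  also have "\<dots> = - (\<Sum>j\<in>UNIV. \<Sum>i\<in>UNIV. Re (cnj (W$j$i) * K$j$i))"
    by (subst sum.swap) (simp only: sum_negf)
  also have "\<dots> = - inner W K" unfolding inner_op ..
  finally show ?thesis .
qed

lemma hermitian_if_orthogonal_anti_hermitian:
  assumes "\<And>K. anti_hermitian K \<Longrightarrow> inner W K = 0"
  shows "hermitian (W::'n::finite op)"
proof -
  define K where "K = W - adjoint W"
  have K: "anti_hermitian K" unfolding K_def anti_hermitian_def by simp
  have "inner K K = inner W K - inner (adjoint W) K" unfolding K_def by (simp add: inner_diff_left)
  also have "\<dots> = 0" using assms[OF K] inner_adjoint_anti_hermitian[OF K, of W] by simp
  finally have "K = 0" by simp
  thus ?thesis unfolding K_def hermitian_def by (metis adjoint_nth eq_iff_diff_eq_0)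
qed

lemma psd_hermitian: "psd A \<Longrightarrow> hermitian A"
  unfolding psd_def by blast

lemma density_hermitian: "density \<rho> \<Longrightarrow> hermitian \<rho>"
  unfolding density_def psd_def by blast

lemma psd_zero: "psd 0"
  unfolding psd_iff_quad_form hermitian_def quad_form_def by simp

lemma psd_add: "psd A \<Longrightarrow> psd B \<Longrightarrow> psd (A + B)"
  unfolding psd_iff_quad_form quad_form_add by (simp add: hermitian_add)

lemma psd_scaleR: "psd A \<Longrightarrow> 0 \<le> c \<Longrightarrow> psd (c *\<^sub>R A)"
  unfolding psd_iff_quad_form quad_form_scaleR by (simp add: hermitian_scaleR)

lemma psd_diag_nonneg: assumes "psd A" shows "0 \<le> Re (A$i$i)"
  using assms quad_form_basis[of A i] unfolding psd_iff_quad_form by metis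

lemma psd_offdiag_eq_0:
  assumes "psd A" "A$j$j = 0" "i \<noteq> j"
  shows "A$i$j = 0"
proof (rule ccontr)
  assume nz: "A$i$j \<noteq> 0"
  define a where "a = A$i$j"
  have herm: "A$j$i = cnj a" using hermitian_nth[OF psd_hermitian[OF assms(1)]] unfolding a_def by blast
  define c where "c = cmod a ^ 2"
  have cpos: "c > 0" using nz by (simp add: c_def a_def)
  have ac: "a * cnj a = of_real c" unfolding c_def by (rule complex_norm_square[symmetric])
  \<comment> \<open>test vector \<open>e\<^sub>i + v e\<^sub>j\<close> with \<open>v\<close> chosen against \<open>a\<close> so that the cross terms win\<close>
  define t where "t = (\<bar>Re (A$i$i)\<bar> + 1) / (2 * c)"
  define v where "v = - (of_real t * cnj a)"
  have q: "quad_form A (\<chi> k. if k = i then 1 else if k = j then v else 0) = A$i$i + a * v + cnj v * cnj a"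
    using quad_form_two[OF assms(3), of A 1 v] assms(2) herm by (simp add: a_def)
  have e1: "a * v = - of_real (t * c)"
    unfolding v_def using ac by (simp add: algebra_simps)
  have e2: "cnj v * cnj a = - of_real (t * c)"
    using arg_cong[OF e1, of cnj] by (simp add: mult.commute)
  have "0 \<le> Re (quad_form A (\<chi> k. if k = i then 1 else if k = j then v else 0))"
    using assms(1) psd_iff_quad_form by blast
  hence "0 \<le> Re (A$i$i) - 2 * (t * c)" unfolding q e1 e2 by (simp add: mult.commute)
  moreover have "2 * (t * c) = \<bar>Re (A$i$i)\<bar> + 1" using cpos by (simp add: t_def)
  ultimately show False by linarith
qed

lemma psd_diag_mat:
  assumes "\<And>i. c i = complex_of_real (Re (c i))" "\<And>i. 0 \<le> Re (c i)"
  shows "psd (diag_mat c)"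
  unfolding psd_iff_quad_form
proof (intro conjI allI)
  have "diag_mat c $ i $ j = cnj (diag_mat c $ j $ i)" for i j
    using assms(1)[of i] by (cases "i = j") (auto simp: complex_eq_iff)
  thus "hermitian (diag_mat c)" unfolding hermitian_def by blast
  fix x :: "complex^'a"
  have eq: "Re (cnj (x$i) * c i * x$i) = Re (c i) * (cmod (x$i))^2" for i
  proof -
    have "cnj (x$i) * c i * x$i = c i * (x$i * cnj (x$i))"
      by (simp only: mult.commute mult.left_commute)
    also have "\<dots> = complex_of_real (Re (c i)) * complex_of_real ((cmod (x$i))^2)"
      by (subst assms(1)) (simp only: complex_norm_square)
    finally show ?thesis by simp
  qed
  have "0 \<le> (\<Sum>i\<in>UNIV. Re (c i) * (cmod (x$i))^2)"
    by (intro sum_nonneg mult_nonneg_nonneg assms(2)) simp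
  thus "0 \<le> Re (quad_form (diag_mat c) x)"
    unfolding quad_form_diag_mat Re_sum eq .
qed

lemma psd_real_diag: "(\<And>i. 0 \<le> l i) \<Longrightarrow> psd (real_diag l)"
  unfolding real_diag_def by (rule psd_diag_mat) auto

lemma mult_le_if_squares_le:
  fixes a b N :: real
  assumes "0 \<le> a" "0 \<le> b" "a\<^sup>2 \<le> N" "b\<^sup>2 \<le> N"
  shows "a * b \<le> N"
proof -
  have "0 \<le> (a - b)\<^sup>2" by simp
  thus ?thesis using assms by (simp add: power2_eq_square algebra_simps)
qed

text \<open>A crude form of Gershgorin's disc theorem.\<close>
lemma psd_diag_dominant:
  assumes hA: "hermitian A"
  shows "psd (real_diag (\<lambda>_. \<Sum>i\<in>UNIV. \<Sum>j\<in>UNIV. cmod (A$i$j)) + A)"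
  unfolding psd_iff_quad_form
proof (intro conjI allI)
  define C where "C = (\<Sum>i\<in>UNIV. \<Sum>j\<in>UNIV. cmod (A$i$j))"
  show "hermitian (real_diag (\<lambda>_. C) + A)"
    by (rule hermitian_add[OF hermitian_real_diag hA])
  fix x :: "complex^'a"
  define N where "N = (\<Sum>k\<in>UNIV. (cmod (x$k))\<^sup>2)"
  have xk: "(cmod (x$k))\<^sup>2 \<le> N" for k
    unfolding N_def by (rule member_le_sum) auto
  have eq: "Re (cnj (x$i) * complex_of_real C * x$i) = C * (cmod (x$i))\<^sup>2" for i
  proof -
    have "cnj (x$i) * complex_of_real C * x$i = complex_of_real C * (x$i * cnj (x$i))"
      by (simp only: mult.commute mult.left_commute)
    also have "\<dots> = complex_of_real (C * (cmod (x$i))\<^sup>2)"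
      by (simp only: complex_norm_square of_real_mult)
    finally show ?thesis by (simp only: Re_complex_of_real)
  qed
  have diag_part: "Re (quad_form (real_diag (\<lambda>_. C)) x) = C * N"
    unfolding real_diag_def quad_form_diag_mat Re_sum eq N_def by (simp add: sum_distrib_left)
  have entry: "- (cmod (A$i$j) * N) \<le> Re (cnj (x$i) * A$i$j * x$j)" for i j
  proof -
    have "cmod (x$i) * cmod (x$j) \<le> N" by (rule mult_le_if_squares_le) (simp_all add: xk)
    hence "cmod (A$i$j) * (cmod (x$i) * cmod (x$j)) \<le> cmod (A$i$j) * N"
      by (rule mult_left_mono) simp
    moreover have "cmod (cnj (x$i) * A$i$j * x$j) = cmod (A$i$j) * (cmod (x$i) * cmod (x$j))"
      by (simp add: norm_mult)
    moreover have "- cmod (cnj (x$i) * A$i$j * x$j) \<le> Re (cnj (x$i) * A$i$j * x$j)"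
      using abs_Re_le_cmod[of "cnj (x$i) * A$i$j * x$j"] by linarith
    ultimately show ?thesis by linarith
  qed
  have "- (C * N) = (\<Sum>i\<in>UNIV. \<Sum>j\<in>UNIV. - (cmod (A$i$j) * N))"
    unfolding C_def by (simp add: sum_distrib_right sum_negf)
  also have "\<dots> \<le> Re (quad_form A x)"
    unfolding quad_form_def Re_sum by (intro sum_mono entry)
  finally show "0 \<le> Re (quad_form (real_diag (\<lambda>_. C) + A) x)"
    unfolding quad_form_add using diag_part by simp
qed

section \<open>Energy-preserving channels\<close>

lemma clinear_map_diff: assumes "clinear_map E" shows "E (A - B) = E A - E B"
proof -
  have "E ((A - B) + B) = E (A - B) + E B" using assms unfolding clinear_map_def by blast
  thus ?thesis by simp
qed

lemma clinear_map_sum: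
  assumes "clinear_map E" "finite S" shows "E (sum f S) = (\<Sum>x\<in>S. E (f x))"
  using assms(2)
proof (induction S rule: finite_induct)
  case empty
  have "E (0 + 0) = E 0 + E 0" using assms(1) unfolding clinear_map_def by blast
  then show ?case by simp
next
  case (insert x F)
  have "E (f x + sum f F) = E (f x) + E (sum f F)" using assms(1) unfolding clinear_map_def by blast
  then show ?case using insert by simp
qed

lemma sum_UNIV_prod_lessThan_1:
  fixes g :: "nat \<times> 'n::finite \<Rightarrow> 'b::comm_monoid_add"
  shows "sum g ({..<1} \<times> UNIV) = (\<Sum>i\<in>UNIV. g (0, i))"
proof -
  have "{..<1::nat} \<times> (UNIV::'n set) = (\<lambda>i. (0, i)) ` UNIV" by auto
  moreover have "inj (\<lambda>i::'n. (0::nat, i))" by (auto simp: inj_def)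
  ultimately show ?thesis by (simp add: sum.reindex)
qed

text \<open>Positivity is complete positivity at ancilla dimension \<open>k = 1\<close>.\<close>
lemma completely_positive_psd:
  assumes cp: "completely_positive E" and A: "psd A"
  shows "psd (E A)"
proof -
  define M where "M = (\<lambda>(p::nat \<times> 'a) (q::nat \<times> 'a). A $ snd p $ snd q :: complex)"
  have "ext_psd 1 M" unfolding ext_psd_def
  proof (intro conjI ballI allI)
    fix p q show "M p q = cnj (M q p)" using hermitian_nth[OF psd_hermitian[OF A]] unfolding M_def by blast
  next
    fix x :: "nat \<times> 'a \<Rightarrow> complex"
    have "(\<Sum>p\<in>{..<1} \<times> UNIV. \<Sum>q\<in>{..<1} \<times> UNIV. cnj (x p) * M p q * x q)
          = quad_form A (\<chi> i. x (0, i))"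
      unfolding sum_UNIV_prod_lessThan_1 quad_form_def M_def by simp
    thus "0 \<le> Re (\<Sum>p\<in>{..<1} \<times> UNIV. \<Sum>q\<in>{..<1} \<times> UNIV. cnj (x p) * M p q * x q)"
      using A psd_iff_quad_form by metis
  qed
  hence ext: "ext_psd 1 (ext_map E M)" using cp unfolding completely_positive_def by blast
  have em: "ext_map E M p q = E A $ snd p $ snd q" for p q
  proof -
    have "(\<chi> i j. M (fst p, i) (fst q, j)) = A" unfolding M_def by (simp add: vec_eq_iff)
    thus ?thesis unfolding ext_map_def by simp
  qed
  show ?thesis unfolding psd_iff_quad_form
  proof (intro conjI allI)
    have "E A $ i $ j = cnj (E A $ j $ i)" for i j
    proof -
      have "(0::nat, i) \<in> {..<1} \<times> UNIV" "(0::nat, j) \<in> {..<1} \<times> UNIV" by auto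
      hence "ext_map E M (0, i) (0, j) = cnj (ext_map E M (0, j) (0, i))"
        using ext unfolding ext_psd_def by blast
      thus ?thesis unfolding em by simp
    qed
    thus "hermitian (E A)" unfolding hermitian_def by blast
  next
    fix y :: "complex^'a"
    define x where "x = (\<lambda>p::nat \<times> 'a. y $ snd p)"
    have "0 \<le> Re (\<Sum>p\<in>{..<1} \<times> UNIV. \<Sum>q\<in>{..<1} \<times> UNIV. cnj (x p) * ext_map E M p q * x q)"
      using ext unfolding ext_psd_def by blast
    also have "(\<Sum>p\<in>{..<1} \<times> UNIV. \<Sum>q\<in>{..<1} \<times> UNIV. cnj (x p) * ext_map E M p q * x q)
        = quad_form (E A) y"
      unfolding sum_UNIV_prod_lessThan_1 quad_form_def em x_def by simp
    finally show "0 \<le> Re (quad_form (E A) y)" .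
  qed
qed

lemma EPC_clinear_map: "E \<in> EPC \<Longrightarrow> clinear_map E"
  unfolding EPC_def CPTP_def by blast

lemma EPC_psd: "E \<in> EPC \<Longrightarrow> psd A \<Longrightarrow> psd (E A)"
  unfolding EPC_def CPTP_def using completely_positive_psd by blast

lemma EPC_diag: "E \<in> EPC \<Longrightarrow> density \<rho> \<Longrightarrow> E \<rho> $ i $ i = \<rho> $ i $ i"
  unfolding EPC_def by blast

definition basis_proj :: "'n::finite \<Rightarrow> 'n op" where
  "basis_proj k = diag_mat (\<lambda>i. if i = k then 1 else 0)"

lemma density_basis_proj: "density (basis_proj k)"
  unfolding density_def basis_proj_def
  by (auto intro: psd_diag_mat simp: trace_diag_mat)

lemma diag_mat_eq_sum_basis_proj: "diag_mat c = (\<Sum>k\<in>UNIV. mscale (c k) (basis_proj k))"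
proof (rule op_eqI)
  fix i j
  have "(\<Sum>k\<in>UNIV. mscale (c k) (basis_proj k)) $ i $ j = (\<Sum>k\<in>UNIV. c k * basis_proj k $ i $ j)"
    by (simp add: sum_component mscale_def)
  also have "\<dots> = diag_mat c $ i $ j"
    by (rule trans[OF sum_UNIV_single[where i=i]]) (simp_all add: basis_proj_def)
  finally show "diag_mat c $ i $ j = (\<Sum>k\<in>UNIV. mscale (c k) (basis_proj k)) $ i $ j" ..
qed

text \<open>A positive matrix with a zero diagonal entry has zero row and column there, and
  \<open>E (basis_proj k)\<close> has the diagonal of \<open>basis_proj k\<close>.\<close>
lemma EPC_basis_proj:
  assumes E: "E \<in> EPC" shows "E (basis_proj k) = basis_proj k"
proof (rule op_eqI)
  fix i j
  have ps: "psd (E (basis_proj k))"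
    using EPC_psd[OF E] density_basis_proj unfolding density_def by blast
  have d: "E (basis_proj k) $ i $ i = basis_proj k $ i $ i" for i
    by (rule EPC_diag[OF E density_basis_proj])
  show "E (basis_proj k) $ i $ j = basis_proj k $ i $ j"
  proof (cases "i = j")
    case True thus ?thesis using d by simp
  next
    case False
    show ?thesis
    proof (cases "j = k")
      case True
      hence "E (basis_proj k) $ j $ i = 0"
        using psd_offdiag_eq_0[OF ps _ not_sym[OF False]] d[of i] False by (simp add: basis_proj_def)
      hence "E (basis_proj k) $ i $ j = 0"
        using hermitian_nth[OF psd_hermitian[OF ps], of i j] by simp
      thus ?thesis using False by (simp add: basis_proj_def)
    next
      case False2: False
      hence "E (basis_proj k) $ i $ j = 0"
        using psd_offdiag_eq_0[OF ps _ False] d[of j] by (simp add: basis_proj_def)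
      thus ?thesis using False by (simp add: basis_proj_def)
    qed
  qed
qed

lemma EPC_diag_mat:
  assumes E: "E \<in> EPC" shows "E (diag_mat c) = diag_mat c"
proof -
  have lin: "clinear_map E" by (rule EPC_clinear_map[OF E])
  have "E (diag_mat c) = (\<Sum>k\<in>UNIV. E (mscale (c k) (basis_proj k)))"
    unfolding diag_mat_eq_sum_basis_proj by (rule clinear_map_sum[OF lin]) simp
  also have "\<dots> = (\<Sum>k\<in>UNIV. mscale (c k) (basis_proj k))"
    using lin EPC_basis_proj[OF E] unfolding clinear_map_def by simp
  finally show ?thesis unfolding diag_mat_eq_sum_basis_proj .
qed

subsection \<open>Schur multipliers\<close>

definition schur_mult :: "'n::finite op \<Rightarrow> 'n op \<Rightarrow> 'n op" where
  "schur_mult G A = (\<chi> i j. G$i$j * A$i$j)"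

lemma schur_mult_nth [simp]: "schur_mult G A $ i $ j = G$i$j * A$i$j"
  by (simp add: schur_mult_def)

lemma ext_sum_regroup:
  fixes x :: "nat \<times> 'n::finite \<Rightarrow> complex" and g :: "'n \<Rightarrow> 'n \<Rightarrow> complex"
  shows "(\<Sum>p\<in>{..<k} \<times> UNIV. \<Sum>q\<in>{..<k} \<times> UNIV. cnj (x p) * (g (snd p) (snd q) * M p q) * x q)
       = (\<Sum>i\<in>UNIV. \<Sum>j\<in>UNIV. g i j * (\<Sum>a<k. \<Sum>b<k. cnj (x (a,i)) * M (a,i) (b,j) * x (b,j)))"
proof -
  define F where "F = (\<lambda>a i b j. cnj (x (a,i)) * (g i j * M (a,i) (b,j)) * x (b,j))"
  have "(\<Sum>p\<in>{..<k} \<times> UNIV. \<Sum>q\<in>{..<k} \<times> UNIV. cnj (x p) * (g (snd p) (snd q) * M p q) * x q)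
      = (\<Sum>a<k. \<Sum>i\<in>UNIV. \<Sum>b<k. \<Sum>j\<in>UNIV. F a i b j)"
    unfolding sum.cartesian_product' F_def by simp
  also have "\<dots> = (\<Sum>i\<in>UNIV. \<Sum>a<k. \<Sum>b<k. \<Sum>j\<in>UNIV. F a i b j)" by (rule sum.swap)
  also have "\<dots> = (\<Sum>i\<in>UNIV. \<Sum>a<k. \<Sum>j\<in>UNIV. \<Sum>b<k. F a i b j)"
    by (rule sum.cong[OF refl], rule sum.cong[OF refl], rule sum.swap)
  also have "\<dots> = (\<Sum>i\<in>UNIV. \<Sum>j\<in>UNIV. \<Sum>a<k. \<Sum>b<k. F a i b j)"
    by (rule sum.cong[OF refl], rule sum.swap)
  also have "\<dots> = (\<Sum>i\<in>UNIV. \<Sum>j\<in>UNIV. g i j * (\<Sum>a<k. \<Sum>b<k. cnj (x (a,i)) * M (a,i) (b,j) * x (b,j)))"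
    unfolding F_def by (simp add: sum_distrib_left mult_ac)
  finally show ?thesis .
qed

lemma psd_ext_compression:
  assumes M: "ext_psd k M"
  shows "psd (\<chi> i j. \<Sum>a<k. \<Sum>b<k. cnj (x (a,i)) * M (a,i) (b,j) * x (b,j) :: 'n::finite op)"
    (is "psd ?N")
proof -
  have Mh: "M p q = cnj (M q p)" if "p \<in> {..<k} \<times> UNIV" "q \<in> {..<k} \<times> UNIV" for p q :: "nat \<times> 'n"
    using M that unfolding ext_psd_def by blast
  have Nn: "?N$i$j = (\<Sum>a<k. \<Sum>b<k. cnj (x (a,i)) * M (a,i) (b,j) * x (b,j))" for i j
    by simp
  show ?thesis unfolding psd_iff_quad_form
  proof (intro conjI allI)
    show "hermitian ?N" unfolding hermitian_def
    proof (intro allI)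
      fix i j
      have "cnj (?N$j$i) = (\<Sum>a<k. \<Sum>b<k. x (a,j) * cnj (M (a,j) (b,i)) * cnj (x (b,i)))"
        unfolding Nn by (simp add: cnj_sum)
      also have "\<dots> = (\<Sum>a<k. \<Sum>b<k. cnj (x (b,i)) * M (b,i) (a,j) * x (a,j))"
      proof (intro sum.cong refl)
        fix a b assume "a \<in> {..<k}" "b \<in> {..<k}"
        hence "M (b,i) (a,j) = cnj (M (a,j) (b,i))" by (intro Mh) auto
        thus "x (a,j) * cnj (M (a,j) (b,i)) * cnj (x (b,i)) = cnj (x (b,i)) * M (b,i) (a,j) * x (a,j)"
          by (simp add: mult_ac)
      qed
      also have "\<dots> = ?N$i$j" unfolding Nn by (rule sum.swap)
      finally show "?N$i$j = cnj (?N$j$i)" by (simp only: complex_cnj_cnj)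
    qed
  next
    fix z :: "complex^'n"
    define y where "y = (\<lambda>p. x p * z $ snd p)"
    have "quad_form ?N z = (\<Sum>i\<in>UNIV. \<Sum>j\<in>UNIV. (cnj (z$i) * z$j) * ?N$i$j)"
      unfolding quad_form_def by (simp add: mult_ac)
    also have "\<dots> = (\<Sum>p\<in>{..<k} \<times> UNIV. \<Sum>q\<in>{..<k} \<times> UNIV.
                       cnj (x p) * ((cnj (z $ snd p) * z $ snd q) * M p q) * x q)"
      using ext_sum_regroup[of x "\<lambda>i j. cnj (z$i) * z$j" M k] unfolding Nn by simp
    also have "\<dots> = (\<Sum>p\<in>{..<k} \<times> UNIV. \<Sum>q\<in>{..<k} \<times> UNIV. cnj (y p) * M p q * y q)"
      unfolding y_def by (simp add: mult_ac)
    moreover have "0 \<le> Re (\<Sum>p\<in>{..<k} \<times> UNIV. \<Sum>q\<in>{..<k} \<times> UNIV. cnj (y p) * M p q * y q)"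
      using M unfolding ext_psd_def by blast
    ultimately show "0 \<le> Re (quad_form ?N z)" by simp
  qed
qed

text \<open>Schur product theorem, in the form: \<open>id\<^sub>k \<otimes> (G \<circ> \<cdot>)\<close> is the Schur multiplier by
  \<open>1 \<otimes> G\<close>, whose pairing with a positive block matrix is a pairing of \<open>G\<close> with a
  compression of it.\<close>
lemma completely_positive_schur_mult:
  assumes hG: "hermitian G"
    and pos: "\<And>N. psd N \<Longrightarrow> 0 \<le> Re (\<Sum>i\<in>UNIV. \<Sum>j\<in>UNIV. G$i$j * N$i$j)"
  shows "completely_positive (schur_mult G)"
  unfolding completely_positive_def
proof (intro allI impI)
  fix k and M :: "nat \<times> 'a \<Rightarrow> nat \<times> 'a \<Rightarrow> complex"
  assume M: "ext_psd k M"
  have em: "ext_map (schur_mult G) M p q = G $ snd p $ snd q * M p q" for p q :: "nat \<times> 'a"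
    unfolding ext_map_def by simp
  show "ext_psd k (ext_map (schur_mult G) M)" unfolding ext_psd_def
  proof (intro conjI ballI allI)
    fix p q :: "nat \<times> 'a" assume "p \<in> {..<k} \<times> UNIV" "q \<in> {..<k} \<times> UNIV"
    hence "M p q = cnj (M q p)" using M unfolding ext_psd_def by blast
    thus "ext_map (schur_mult G) M p q = cnj (ext_map (schur_mult G) M q p)"
      unfolding em using hermitian_nth[OF hG, of "snd p" "snd q"] by simp
  next
    fix x :: "nat \<times> 'a \<Rightarrow> complex"
    define N :: "'a op" where "N = (\<chi> i j. \<Sum>a<k. \<Sum>b<k. cnj (x (a,i)) * M (a,i) (b,j) * x (b,j))"
    have "(\<Sum>p\<in>{..<k} \<times> UNIV. \<Sum>q\<in>{..<k} \<times> UNIV. cnj (x p) * ext_map (schur_mult G) M p q * x q)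
        = (\<Sum>i\<in>UNIV. \<Sum>j\<in>UNIV. G$i$j * N$i$j)"
      unfolding em N_def using ext_sum_regroup[of x "\<lambda>i j. G$i$j" M k] by simp
    moreover have "psd N" unfolding N_def by (rule psd_ext_compression[OF M])
    ultimately show "0 \<le> Re (\<Sum>p\<in>{..<k} \<times> UNIV. \<Sum>q\<in>{..<k} \<times> UNIV.
                              cnj (x p) * ext_map (schur_mult G) M p q * x q)"
      using pos by simp
  qed
qed

lemma schur_mult_EPC:
  assumes "hermitian G" and dG: "\<And>i. G$i$i = 1"
    and "\<And>N. psd N \<Longrightarrow> 0 \<le> Re (\<Sum>i\<in>UNIV. \<Sum>j\<in>UNIV. G$i$j * N$i$j)"
  shows "schur_mult G \<in> EPC"
proof -
  have "clinear_map (schur_mult G)" unfolding clinear_map_def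
  proof (intro conjI allI)
    fix A B show "schur_mult G (A + B) = schur_mult G A + schur_mult G B"
      by (intro op_eqI) (simp add: distrib_left)
  next
    fix c A show "schur_mult G (mscale c A) = mscale c (schur_mult G A)"
      by (intro op_eqI) (simp add: mscale_def mult.left_commute)
  qed
  moreover have "trace_preserving (schur_mult G)"
    unfolding trace_preserving_def trace_def using dG by simp
  moreover have "completely_positive (schur_mult G)"
    by (rule completely_positive_schur_mult[OF assms(1,3)])
  ultimately show ?thesis
    unfolding EPC_def CPTP_def using dG by simp
qed

section \<open>The diagonal domination program\<close>

definition dominating_diags :: "'n::finite op \<Rightarrow> ('n \<Rightarrow> real) set" where
  "dominating_diags \<rho> = {l. psd (real_diag l - \<rho>)}"

definition dom_trace :: "'n::finite op \<Rightarrow> real" where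
  "dom_trace \<rho> = Inf ((\<lambda>l. sum l UNIV) ` dominating_diags \<rho>)"

lemma density_sum_Re_diag: assumes "density \<rho>" shows "(\<Sum>i\<in>UNIV. Re (\<rho>$i$i)) = 1"
proof -
  have "trace \<rho> = 1" using assms unfolding density_def by blast
  thus ?thesis unfolding trace_def Re_sum[symmetric] by simp
qed

lemma dominating_diag_ge:
  assumes "l \<in> dominating_diags \<rho>" shows "Re (\<rho>$i$i) \<le> l i"
  using psd_diag_nonneg[of "real_diag l - \<rho>" i] assms
  unfolding dominating_diags_def real_diag_def by simp

lemma dominating_diag_nonneg:
  assumes "density \<rho>" "l \<in> dominating_diags \<rho>" shows "0 \<le> l i"
proof -
  have "0 \<le> Re (\<rho>$i$i)" using assms(1) psd_diag_nonneg unfolding density_def by blast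
  thus ?thesis using dominating_diag_ge[OF assms(2), of i] by linarith
qed

lemma one_le_sum_dominating_diag:
  assumes "density \<rho>" "l \<in> dominating_diags \<rho>" shows "1 \<le> sum l UNIV"
  using sum_mono[of UNIV "\<lambda>i. Re (\<rho>$i$i)" l] dominating_diag_ge[OF assms(2)]
    density_sum_Re_diag[OF assms(1)] by simp

lemma dominating_diags_nonempty:
  assumes "density \<rho>" shows "dominating_diags \<rho> \<noteq> {}"
proof -
  have "psd (real_diag (\<lambda>_. \<Sum>i\<in>UNIV. \<Sum>j\<in>UNIV. cmod ((- \<rho>)$i$j)) + - \<rho>)"
    by (rule psd_diag_dominant[OF hermitian_uminus[OF density_hermitian[OF assms]]])
  thus ?thesis unfolding dominating_diags_def by auto
qed

lemma dom_trace_le: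
  assumes "density \<rho>" "l \<in> dominating_diags \<rho>" shows "dom_trace \<rho> \<le> sum l UNIV"
  unfolding dom_trace_def
proof (rule cInf_lower)
  show "bdd_below ((\<lambda>l. sum l UNIV) ` dominating_diags \<rho>)"
    using one_le_sum_dominating_diag[OF assms(1)] by (intro bdd_belowI[of _ 1]) auto
qed (use assms(2) in simp)

lemma one_le_dom_trace: assumes "density \<rho>" shows "1 \<le> dom_trace \<rho>"
  unfolding dom_trace_def
  by (rule cInf_greatest)
    (use dominating_diags_nonempty[OF assms] one_le_sum_dominating_diag[OF assms] in auto)

lemma dom_trace_approx:
  assumes "density \<rho>" "e > 0" shows "\<exists>l\<in>dominating_diags \<rho>. sum l UNIV < dom_trace \<rho> + e"
proof -
  have "Inf ((\<lambda>l. sum l UNIV) ` dominating_diags \<rho>) < dom_trace \<rho> + e"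
    using assms(2) unfolding dom_trace_def by simp
  then obtain y where "y \<in> (\<lambda>l. sum l UNIV) ` dominating_diags \<rho>" "y < dom_trace \<rho> + e"
    using cInf_lessD dominating_diags_nonempty[OF assms(1)] by (metis image_is_empty)
  thus ?thesis by blast
qed

lemma EPC_entry_sum_le_dom_trace:
  assumes "density \<rho>" "E \<in> EPC" shows "Re (entry_sum (E \<rho>)) \<le> dom_trace \<rho>"
  unfolding dom_trace_def
proof (rule cInf_greatest)
  show "(\<lambda>l. sum l UNIV) ` dominating_diags \<rho> \<noteq> {}"
    using dominating_diags_nonempty[OF assms(1)] by blast
  fix s assume "s \<in> (\<lambda>l. sum l UNIV) ` dominating_diags \<rho>"
  then obtain l where l: "psd (real_diag l - \<rho>)" "s = sum l UNIV"
    unfolding dominating_diags_def by blast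
  have "E (real_diag l - \<rho>) = real_diag l - E \<rho>"
    unfolding clinear_map_diff[OF EPC_clinear_map[OF assms(2)]] real_diag_def EPC_diag_mat[OF assms(2)] ..
  hence "psd (real_diag l - E \<rho>)" using EPC_psd[OF assms(2) l(1)] by simp
  hence "0 \<le> Re (quad_form (real_diag l - E \<rho>) (\<chi> i. 1))" using psd_iff_quad_form by blast
  also have "quad_form (real_diag l - E \<rho>) (\<chi> i. 1) = of_real (sum l UNIV) - entry_sum (E \<rho>)"
    unfolding entry_sum_eq_quad_form[symmetric] entry_sum_diff real_diag_def entry_sum_diag_mat by simp
  finally show "Re (entry_sum (E \<rho>)) \<le> s" using l(2) by simp
qed

subsection \<open>Strong duality\<close>

lemma eq_0_if_scaled_bounded_above:
  fixes x :: real assumes "\<And>r. r * x \<le> B" shows "x = 0"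
proof (rule ccontr)
  assume "x \<noteq> 0"
  hence "((\<bar>B\<bar> + 1) / x) * x = \<bar>B\<bar> + 1" by simp
  moreover have "((\<bar>B\<bar> + 1) / x) * x \<le> B" by (rule assms)
  ultimately show False by linarith
qed

lemma nonneg_if_scaled_bounded_below:
  fixes x :: real assumes "\<And>c. 0 \<le> c \<Longrightarrow> - B \<le> c * x" shows "0 \<le> x"
proof (rule ccontr)
  assume "\<not> 0 \<le> x"
  hence x: "x < 0" by simp
  hence "- B \<le> ((\<bar>B\<bar> + 1) / (- x)) * x" by (intro assms divide_nonneg_pos) auto
  moreover have "((\<bar>B\<bar> + 1) / (- x)) * x = - (\<bar>B\<bar> + 1)" using x by simp
  ultimately show False by linarith
qed

lemma bounded_below_on_ray:
  fixes a b t :: real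
  assumes "\<And>s. s < t \<Longrightarrow> b \<le> a * s"
  shows "a \<le> 0" "b \<le> a * t"
proof -
  show a: "a \<le> 0"
  proof (rule ccontr)
    assume "\<not> a \<le> 0"
    define s where "s = min (t - 1) ((b - 1) / a)"
    have "b \<le> a * s" by (rule assms) (simp add: s_def)
    moreover have "a * s \<le> b - 1"
      using \<open>\<not> a \<le> 0\<close> mult_left_mono[of s "(b - 1) / a" a] by (simp add: s_def)
    ultimately show False by linarith
  qed
  show "b \<le> a * t"
  proof (rule ccontr)
    assume nb: "\<not> b \<le> a * t"
    show False
    proof (cases "a = 0")
      case True thus False using assms[of "t - 1"] nb by simp
    next
      case False
      hence an: "a < 0" using a by simp
      define q where "q = b / a"
      define s where "s = (q + t) / 2"
      have "q < t" using nb an unfolding q_def by (simp add: divide_less_eq mult.commute)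
      hence "s < t" "q < s" by (simp_all add: s_def)
      hence "b \<le> a * s" "a * s < a * q" using assms an by (auto simp: mult_less_cancel_left)
      thus False using an by (simp add: q_def)
    qed
  qed
qed

text \<open>\<open>inner\<close> is the real part of the Frobenius product on all complex matrices; the
  anti-hermitian summand \<open>K\<close> forces a separating functional to be hermitian.\<close>
definition shifted_cone :: "'n::finite op \<Rightarrow> (real \<times> 'n op) set" where
  "shifted_cone \<rho> = {(sum l UNIV, real_diag l - \<rho> - P + K) | l P K. psd P \<and> anti_hermitian K}"

lemma convex_shifted_cone: "convex (shifted_cone \<rho>)"
  unfolding convex_def
proof (intro ballI allI impI)
  fix x y and u v :: real
  assume x: "x \<in> shifted_cone \<rho>" and y: "y \<in> shifted_cone \<rho>" and uv: "0 \<le> u" "0 \<le> v" "u + v = 1"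
  obtain l1 P1 K1 where 1: "x = (sum l1 UNIV, real_diag l1 - \<rho> - P1 + K1)" "psd P1" "anti_hermitian K1"
    using x unfolding shifted_cone_def by blast
  obtain l2 P2 K2 where 2: "y = (sum l2 UNIV, real_diag l2 - \<rho> - P2 + K2)" "psd P2" "anti_hermitian K2"
    using y unfolding shifted_cone_def by blast
  define l where "l = (\<lambda>i. u * l1 i + v * l2 i)"
  define P where "P = u *\<^sub>R P1 + v *\<^sub>R P2"
  define K where "K = u *\<^sub>R K1 + v *\<^sub>R K2"
  have v: "v = 1 - u" using uv by simp
  have e1: "u * sum l1 UNIV + v * sum l2 UNIV = sum l UNIV"
    unfolding l_def by (simp add: sum.distrib sum_distrib_left)
  have e2: "u *\<^sub>R (real_diag l1 - \<rho> - P1 + K1) + v *\<^sub>R (real_diag l2 - \<rho> - P2 + K2)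
      = real_diag l - \<rho> - P + K"
  proof (rule op_eqI)
    fix i j
    show "(u *\<^sub>R (real_diag l1 - \<rho> - P1 + K1) + v *\<^sub>R (real_diag l2 - \<rho> - P2 + K2)) $ i $ j
        = (real_diag l - \<rho> - P + K) $ i $ j"
      unfolding P_def K_def l_def v
      by (simp only: vector_add_component vector_minus_component scaleR_op_nth real_diag_def diag_mat_nth)
         (cases "i = j", simp_all add: algebra_simps of_real_diff)
  qed
  have "psd P" unfolding P_def using 1 2 uv by (intro psd_add psd_scaleR) auto
  moreover have "anti_hermitian K" unfolding K_def using 1 2 by (intro anti_hermitian_add anti_hermitian_scaleR)
  ultimately have "(sum l UNIV, real_diag l - \<rho> - P + K) \<in> shifted_cone \<rho>"
    unfolding shifted_cone_def by blast
  thus "u *\<^sub>R x + v *\<^sub>R y \<in> shifted_cone \<rho>" unfolding 1(1) 2(1) using e1 e2 by simp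
qed

lemma shifted_cone_disjoint_ray:
  assumes "density \<rho>" shows "shifted_cone \<rho> \<inter> {..<dom_trace \<rho>} \<times> {0} = {}"
proof (rule ccontr)
  assume "shifted_cone \<rho> \<inter> {..<dom_trace \<rho>} \<times> {0} \<noteq> {}"
  then obtain l P K where e: "real_diag l - \<rho> - P + K = 0" "sum l UNIV < dom_trace \<rho>"
      "psd P" "anti_hermitian K"
    unfolding shifted_cone_def by auto
  have K: "K = P - (real_diag l - \<rho>)" using e(1) by (simp add: algebra_simps)
  have "hermitian K" unfolding K
    by (intro hermitian_diff psd_hermitian[OF e(3)] hermitian_real_diag density_hermitian[OF assms])
  hence "K = 0" using hermitian_anti_hermitian_eq_0 e(4) by blast
  hence "l \<in> dominating_diags \<rho>" using e(3) K unfolding dominating_diags_def by simp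
  thus False using dom_trace_le[OF assms] e(2) by fastforce
qed

text \<open>Test \<open>Y\<close> against the positive matrix \<open>C I - Y\<close> of \<open>psd_diag_dominant\<close>.\<close>
lemma eq_0_if_inner_psd_nonneg_zero_diag:
  fixes Y :: "'n::finite op"
  assumes "hermitian Y" "\<And>P. psd P \<Longrightarrow> 0 \<le> inner Y P" "\<And>i. Re (Y$i$i) = 0"
  shows "Y = 0"
proof -
  define l where "l = (\<lambda>_::'n. \<Sum>i\<in>UNIV. \<Sum>j\<in>UNIV. cmod ((- Y)$i$j))"
  have "psd (real_diag l + - Y)"
    unfolding l_def by (rule psd_diag_dominant[OF hermitian_uminus[OF assms(1)]])
  hence "0 \<le> inner Y (real_diag l + - Y)" by (rule assms(2))
  also have "\<dots> = - inner Y Y"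
    unfolding diff_conv_add_uminus[symmetric] inner_diff_right inner_real_diag assms(3) by simp
  finally show ?thesis by (metis antisym inner_ge_zero inner_eq_zero_iff neg_0_le_iff_le)
qed

lemma shifted_cone_separation:
  assumes "density \<rho>"
  obtains a0 and Y :: "'n::finite op" and b
  where "(a0, Y) \<noteq> 0"
    and "\<And>l P K. psd P \<Longrightarrow> anti_hermitian K \<Longrightarrow>
           a0 * sum l UNIV + inner Y (real_diag l - \<rho> - P + K) \<le> b"
    and "\<And>s. s < dom_trace \<rho> \<Longrightarrow> b \<le> a0 * s"
proof -
  have "(0, real_diag (\<lambda>_. 0) - \<rho> - 0 + 0) \<in> shifted_cone \<rho>"
    unfolding shifted_cone_def using psd_zero anti_hermitian_zero by force
  hence "shifted_cone \<rho> \<noteq> {}" by blast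
  moreover have "{..<dom_trace \<rho>} \<times> {0::'n op} \<noteq> {}" by simp
  ultimately obtain a b where ab: "a \<noteq> 0" "\<forall>x\<in>shifted_cone \<rho>. inner a x \<le> b"
      "\<forall>x\<in>{..<dom_trace \<rho>} \<times> {0}. b \<le> inner a x"
    using separating_hyperplane_sets[OF convex_shifted_cone
        convex_Times[OF convex_real_interval(4) convex_singleton] _ _ shifted_cone_disjoint_ray[OF assms]]
    by blast
  obtain a0 Y where a: "a = (a0, Y)" by (cases a)
  show thesis
  proof
    show "(a0, Y) \<noteq> 0" using ab(1) a by simp
  next
    fix l and P K :: "'n op" assume "psd P" "anti_hermitian K"
    hence "(sum l UNIV, real_diag l - \<rho> - P + K) \<in> shifted_cone \<rho>" unfolding shifted_cone_def by blast
    thus "a0 * sum l UNIV + inner Y (real_diag l - \<rho> - P + K) \<le> b" using ab(2) unfolding a by force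
  next
    fix s assume "s < dom_trace \<rho>"
    thus "b \<le> a0 * s" using ab(3) unfolding a by force
  qed
qed

lemma dual_certificate_exists:
  assumes "density \<rho>"
  obtains W :: "'n::finite op"
  where "hermitian W" "\<And>i. W$i$i = 1" "\<And>P. psd P \<Longrightarrow> 0 \<le> inner W P" "dom_trace \<rho> \<le> inner W \<rho>"
proof -
  obtain a0 and Y :: "'n op" and b where nz: "(a0, Y) \<noteq> 0"
    and cone: "\<And>l P K. psd P \<Longrightarrow> anti_hermitian K \<Longrightarrow>
                 a0 * sum l UNIV + inner Y (real_diag l - \<rho> - P + K) \<le> b"
    and ray: "\<And>s. s < dom_trace \<rho> \<Longrightarrow> b \<le> a0 * s"
    using shifted_cone_separation[OF assms] by metis
  have Y_rho: "- inner Y \<rho> \<le> b"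
    using cone[OF psd_zero anti_hermitian_zero, of "\<lambda>_. 0"] by (simp add: real_diag_zero inner_diff_right)
  have Y_psd: "0 \<le> inner Y P" if "psd P" for P
  proof (rule nonneg_if_scaled_bounded_below[where B = "b + inner Y \<rho>"])
    fix c :: real assume "0 \<le> c"
    show "- (b + inner Y \<rho>) \<le> c * inner Y P"
      using cone[OF psd_scaleR[OF that \<open>0 \<le> c\<close>] anti_hermitian_zero, of "\<lambda>_. 0"]
      by (simp add: real_diag_zero inner_diff_right)
  qed
  have Y_anti_hermitian: "inner Y K = 0" if "anti_hermitian K" for K
  proof (rule eq_0_if_scaled_bounded_above[where B = "b + inner Y \<rho>"])
    fix r :: real
    show "r * inner Y K \<le> b + inner Y \<rho>"
      using cone[OF psd_zero anti_hermitian_scaleR[OF that], of "\<lambda>_. 0" r]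
      by (simp add: real_diag_zero inner_diff_right)
  qed
  have Y_diag: "Re (Y$i$i) = - a0" for i
  proof -
    have "a0 + Re (Y$i$i) = 0"
    proof (rule eq_0_if_scaled_bounded_above[where B = "b + inner Y \<rho>"])
      fix r :: real
      define l where "l = (\<lambda>k. if k = i then r else 0)"
      have "sum l UNIV = r" "inner Y (real_diag l) = r * Re (Y$i$i)"
        unfolding l_def inner_real_diag by (auto intro: trans[OF sum_UNIV_single[where i=i]])
      thus "r * (a0 + Re (Y$i$i)) \<le> b + inner Y \<rho>"
        using cone[OF psd_zero anti_hermitian_zero, of l] by (simp add: algebra_simps inner_diff_right)
    qed
    thus ?thesis by simp
  qed
  have Y_hermitian: "hermitian Y"
    by (rule hermitian_if_orthogonal_anti_hermitian[OF Y_anti_hermitian])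
  have a0: "a0 \<le> 0" "b \<le> a0 * dom_trace \<rho>" using bounded_below_on_ray[OF ray] by blast+
  have "a0 \<noteq> 0"
  proof
    assume "a0 = 0"
    hence "Y = 0" using eq_0_if_inner_psd_nonneg_zero_diag[OF Y_hermitian Y_psd] Y_diag by simp
    thus False using nz \<open>a0 = 0\<close> by (simp add: zero_prod_def)
  qed
  hence a0_neg: "0 < - a0" using a0(1) by simp
  define W where "W = (1 / - a0) *\<^sub>R Y"
  show thesis
  proof
    show "hermitian W" unfolding W_def by (rule hermitian_scaleR[OF Y_hermitian])
    show "W$i$i = 1" for i
    proof -
      have "Y$i$i = complex_of_real (- a0)"
        using hermitian_diag_real[OF Y_hermitian, of i] unfolding Y_diag .
      thus ?thesis using a0_neg unfolding W_def scaleR_op_nth by simp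
    qed
    show "0 \<le> inner W P" if "psd P" for P
      using Y_psd[OF that] a0_neg unfolding W_def inner_scaleR_left by (simp add: divide_nonneg_neg)
    have "- a0 * dom_trace \<rho> \<le> inner Y \<rho>"
      using Y_rho a0(2) by simp
    thus "dom_trace \<rho> \<le> inner W \<rho>"
      using a0_neg unfolding W_def inner_scaleR_left by (simp add: field_simps)
  qed
qed

lemma EPC_attains_dom_trace:
  assumes "density \<rho>"
  obtains E where "E \<in> EPC" "Re (entry_sum (E \<rho>)) = dom_trace \<rho>"
proof -
  obtain W :: "'a op" where W: "hermitian W" "\<And>i. W$i$i = 1" "\<And>P. psd P \<Longrightarrow> 0 \<le> inner W P"
      "dom_trace \<rho> \<le> inner W \<rho>"
    using dual_certificate_exists[OF assms] by blast
  define G :: "'a op" where "G = (\<chi> i j. cnj (W$i$j))"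
  have pairing: "Re (\<Sum>i\<in>UNIV. \<Sum>j\<in>UNIV. G$i$j * N$i$j) = inner W N" for N
    unfolding inner_op G_def by simp
  have "hermitian G" unfolding hermitian_def
  proof (intro allI)
    fix i j
    have "W$j$i = cnj (W$i$j)" by (rule hermitian_nth[OF W(1)])
    thus "G$i$j = cnj (G$j$i)" unfolding G_def by simp
  qed
  moreover have "G$i$i = 1" for i unfolding G_def using W(2) by simp
  ultimately have E: "schur_mult G \<in> EPC"
    by (rule schur_mult_EPC) (use pairing W(3) in simp)
  have "Re (entry_sum (schur_mult G \<rho>)) = inner W \<rho>"
    unfolding entry_sum_def schur_mult_nth pairing[symmetric] ..
  hence "dom_trace \<rho> \<le> Re (entry_sum (schur_mult G \<rho>))" using W(4) by simp
  thus thesis using that[OF E] EPC_entry_sum_le_dom_trace[OF assms E] by simp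
qed

section \<open>Max-relative entropy of coherence\<close>

lemma mult_hamiltonian_nth: "(A ** hamiltonian En) $ i $ j = A$i$j * complex_of_real (En j)"
  unfolding matrix_matrix_mult_def hamiltonian_def
  by (simp, rule trans[OF sum_UNIV_single[where i=j]]) auto

lemma hamiltonian_mult_nth: "(hamiltonian En ** A) $ i $ j = complex_of_real (En i) * A$i$j"
  unfolding matrix_matrix_mult_def hamiltonian_def
  by (simp, rule trans[OF sum_UNIV_single[where i=i]]) auto

lemma offdiag_eq_0_if_commutes_hamiltonian:
  assumes "inj En" "\<gamma> ** hamiltonian En = hamiltonian En ** \<gamma>" "i \<noteq> j"
  shows "\<gamma>$i$j = 0"
proof -
  have "\<gamma>$i$j * complex_of_real (En j) = complex_of_real (En i) * \<gamma>$i$j"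
    using arg_cong[OF assms(2), of "\<lambda>A. A$i$j"] unfolding mult_hamiltonian_nth hamiltonian_mult_nth .
  hence "\<gamma>$i$j * complex_of_real (En j - En i) = 0" by (simp add: algebra_simps)
  moreover have "En j - En i \<noteq> 0" using assms(1,3) by (metis eq_iff_diff_eq_0 injD)
  ultimately show ?thesis by simp
qed

lemma real_diag_commutes_hamiltonian: "real_diag l ** hamiltonian En = hamiltonian En ** real_diag l"
  by (intro op_eqI) (simp add: mult_hamiltonian_nth hamiltonian_mult_nth real_diag_def mult.commute)

lemma mscale_real_commuting_hermitian:
  assumes "inj En" "\<gamma> ** hamiltonian En = hamiltonian En ** \<gamma>" "hermitian \<gamma>"
  shows "mscale (complex_of_real c) \<gamma> = real_diag (\<lambda>i. c * Re (\<gamma>$i$i))"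
proof (rule op_eqI)
  fix i j
  show "mscale (complex_of_real c) \<gamma> $ i $ j = real_diag (\<lambda>i. c * Re (\<gamma>$i$i)) $ i $ j"
  proof (cases "i = j")
    case True
    have "\<gamma>$i$i = complex_of_real (Re (\<gamma>$i$i))" by (rule hermitian_diag_real[OF assms(3)])
    thus ?thesis using True unfolding mscale_def real_diag_def by (simp add: of_real_mult)
  next
    case False
    thus ?thesis using offdiag_eq_0_if_commutes_hamiltonian[OF assms(1,2) False]
      unfolding mscale_def real_diag_def by simp
  qed
qed

lemma log_dom_trace_le_Rcoh_max:
  assumes En: "inj En" and \<rho>: "density \<rho>"
  shows "ereal (log 2 (dom_trace \<rho>)) \<le> Rcoh_max En \<rho>"
  unfolding Rcoh_max_def
proof (rule Inf_greatest)
  fix x assume "x \<in> {Dmax \<rho> \<gamma> |\<gamma>. density \<gamma> \<and> \<gamma> ** hamiltonian En = hamiltonian En ** \<gamma>}"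
  then obtain \<gamma> where \<gamma>: "x = Dmax \<rho> \<gamma>" "density \<gamma>" "\<gamma> ** hamiltonian En = hamiltonian En ** \<gamma>"
    by blast
  show "ereal (log 2 (dom_trace \<rho>)) \<le> x" unfolding \<gamma>(1) Dmax_def
  proof (rule Inf_greatest)
    fix y assume "y \<in> {ereal s |s. 0 \<le> s \<and> psd (mscale (complex_of_real (2 powr s)) \<gamma> - \<rho>)}"
    then obtain s where s: "y = ereal s" "psd (mscale (complex_of_real (2 powr s)) \<gamma> - \<rho>)" by blast
    define l where "l = (\<lambda>i. 2 powr s * Re (\<gamma>$i$i))"
    have "l \<in> dominating_diags \<rho>"
      using s(2) mscale_real_commuting_hermitian[OF En \<gamma>(3) density_hermitian[OF \<gamma>(2)]]
      unfolding dominating_diags_def l_def by simp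
    hence "dom_trace \<rho> \<le> sum l UNIV" by (rule dom_trace_le[OF \<rho>])
    also have "sum l UNIV = 2 powr s"
      unfolding l_def sum_distrib_left[symmetric] density_sum_Re_diag[OF \<gamma>(2)] by simp
    finally have "log 2 (dom_trace \<rho>) \<le> s"
      using one_le_dom_trace[OF \<rho>] by (subst log_le_iff) auto
    thus "ereal (log 2 (dom_trace \<rho>)) \<le> y" unfolding s(1) by simp
  qed
qed

text \<open>Every dominating diagonal \<open>\<Lambda>\<close> yields the free state \<open>\<Lambda> / tr \<Lambda>\<close> with
  \<open>D_max(\<rho> \<parallel> \<Lambda> / tr \<Lambda>) \<le> log (tr \<Lambda>)\<close>; take \<open>tr \<Lambda>\<close> close to \<open>dom_trace \<rho>\<close>.\<close>
lemma Rcoh_max_le_log_dom_trace: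
  assumes \<rho>: "density \<rho>"
  shows "Rcoh_max En \<rho> \<le> ereal (log 2 (dom_trace \<rho>))"
proof (rule ereal_le_epsilon2)
  fix e :: real assume e: "0 < e"
  define t where "t = dom_trace \<rho>"
  have t1: "1 \<le> t" unfolding t_def by (rule one_le_dom_trace[OF \<rho>])
  have "1 < 2 powr e" using e by simp
  hence "0 < t * 2 powr e - t" using t1 by (simp add: algebra_simps)
  then obtain l where "l \<in> dominating_diags \<rho>" "sum l UNIV < t + (t * 2 powr e - t)"
    using dom_trace_approx[OF \<rho>] unfolding t_def by blast
  hence l: "l \<in> dominating_diags \<rho>" "sum l UNIV < t * 2 powr e" by simp_all
  define \<sigma> where "\<sigma> = sum l UNIV"
  have \<sigma>1: "1 \<le> \<sigma>" unfolding \<sigma>_def by (rule one_le_sum_dominating_diag[OF \<rho> l(1)])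
  define \<gamma> where "\<gamma> = real_diag (\<lambda>i. l i / \<sigma>)"
  have "density \<gamma>" unfolding density_def \<gamma>_def
  proof
    show "psd (real_diag (\<lambda>i. l i / \<sigma>))"
      by (rule psd_real_diag) (use dominating_diag_nonneg[OF \<rho> l(1)] \<sigma>1 in auto)
    have "(\<Sum>i\<in>UNIV. l i / \<sigma>) = 1" unfolding sum_divide_distrib[symmetric] \<sigma>_def
      using \<sigma>1 unfolding \<sigma>_def by simp
    thus "trace (real_diag (\<lambda>i. l i / \<sigma>)) = 1" unfolding real_diag_def trace_diag_mat
      by (metis of_real_1 of_real_sum)
  qed
  hence "Rcoh_max En \<rho> \<le> Dmax \<rho> \<gamma>"
    unfolding Rcoh_max_def \<gamma>_def using real_diag_commutes_hamiltonian by (intro Inf_lower) blast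
  also have "Dmax \<rho> \<gamma> \<le> ereal (log 2 \<sigma>)"
  proof -
    have "2 powr log 2 \<sigma> = \<sigma>" using \<sigma>1 by simp
    hence "mscale (complex_of_real (2 powr log 2 \<sigma>)) \<gamma> = real_diag l"
      using \<sigma>1 unfolding \<gamma>_def real_diag_def mscale_def by (intro op_eqI) simp
    hence "psd (mscale (complex_of_real (2 powr log 2 \<sigma>)) \<gamma> - \<rho>)"
      using l(1) unfolding dominating_diags_def by simp
    moreover have "0 \<le> log 2 \<sigma>" using \<sigma>1 by simp
    ultimately show ?thesis unfolding Dmax_def by (intro Inf_lower) blast
  qed
  also have "log 2 \<sigma> \<le> log 2 t + e"
  proof -
    have "2 powr (log 2 t + e) = t * 2 powr e" using t1 by (simp add: powr_add)
    hence "\<sigma> \<le> 2 powr (log 2 t + e)" using l(2) unfolding \<sigma>_def by simp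
    thus ?thesis using \<sigma>1 by (subst log_le_iff) auto
  qed
  finally show "Rcoh_max En \<rho> \<le> ereal (log 2 (dom_trace \<rho>)) + ereal e"
    unfolding t_def by simp
qed

lemma Rcoh_max_eq_log_dom_trace:
  assumes "inj En" "density \<rho>"
  shows "Rcoh_max En \<rho> = ereal (log 2 (dom_trace \<rho>))"
  by (rule antisym[OF Rcoh_max_le_log_dom_trace[OF assms(2)] log_dom_trace_le_Rcoh_max[OF assms]])

section \<open>Passive states and the maximally coherent state\<close>

lemma passive_state_eq_diag_mat: "passive_state En \<tau> \<Longrightarrow> \<tau> = diag_mat (\<lambda>i. \<tau>$i$i)"
  unfolding passive_state_def by (intro op_eqI) auto

lemma passive_state_exists: "\<exists>\<tau>::'n::finite op. passive_state En \<tau>"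
proof -
  define d where "d = real CARD('n)"
  have d0: "d > 0" unfolding d_def by simp
  define \<tau> :: "'n op" where "\<tau> = real_diag (\<lambda>_. 1 / d)"
  have "psd \<tau>" unfolding \<tau>_def by (rule psd_real_diag) (use d0 in simp)
  moreover have "trace \<tau> = 1" unfolding \<tau>_def real_diag_def trace_diag_mat using d0 by (simp add: d_def)
  ultimately have "passive_state En \<tau>" unfolding passive_state_def density_def
    by (auto simp: \<tau>_def real_diag_def)
  thus ?thesis by blast
qed

lemma card_mult_Re_phi_plus_exp: "real CARD('n) * Re (phi_plus_exp A) = Re (entry_sum A)"
  for A :: "'n::finite op"
  unfolding phi_plus_exp_def entry_sum_def[symmetric] by (simp add: Re_divide_of_nat)

lemma Re_phi_plus_exp_EPC_passive:
  fixes \<tau> :: "'n::finite op"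
  assumes "E \<in> EPC" "passive_state En \<tau>"
  shows "Re (phi_plus_exp (E \<tau>)) = 1 / real CARD('n)"
proof -
  have "E \<tau> = \<tau>" using passive_state_eq_diag_mat[OF assms(2)] EPC_diag_mat[OF assms(1)] by metis
  moreover have "entry_sum \<tau> = 1"
    using passive_state_eq_diag_mat[OF assms(2)] assms(2) unfolding passive_state_def density_def
    by (metis entry_sum_diag_mat trace_diag_mat)
  ultimately show ?thesis
    using card_mult_Re_phi_plus_exp[of "E \<tau>"] by (simp add: field_simps)
qed

lemma passive_ratio_set:
  assumes "E \<in> EPC"
  shows "{Re (phi_plus_exp (E \<rho>)) / Re (phi_plus_exp (E \<tau>)) | \<tau>. passive_state En \<tau>}
       = {Re (entry_sum (E \<rho>))}"
proof -
  have ratio: "Re (phi_plus_exp (E \<rho>)) / Re (phi_plus_exp (E \<tau>)) = Re (entry_sum (E \<rho>))"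
    if "passive_state En \<tau>" for \<tau>
    unfolding Re_phi_plus_exp_EPC_passive[OF assms that] card_mult_Re_phi_plus_exp[symmetric]
    by simp
  obtain \<tau>\<^sub>0 :: "'a op" where "passive_state En \<tau>\<^sub>0" using passive_state_exists by blast
  thus ?thesis using ratio[OF \<open>passive_state En \<tau>\<^sub>0\<close>, symmetric] ratio by blast
qed

lemma is_min_singleton_iff: "is_min {v} w \<longleftrightarrow> w = v"
  unfolding is_min_def by auto

lemma is_max_EPC_entry_sum:
  assumes "density \<rho>"
  shows "is_max {Re (entry_sum (E \<rho>)) | E. E \<in> EPC} (dom_trace \<rho>)"
proof -
  obtain E where "E \<in> EPC" "Re (entry_sum (E \<rho>)) = dom_trace \<rho>"
    by (rule EPC_attains_dom_trace[OF assms])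
  thus ?thesis unfolding is_max_def using EPC_entry_sum_le_dom_trace[OF assms] by force
qed

theorem mainTheorem16:
  fixes En :: "'n::finite \<Rightarrow> real" and \<rho> :: "complex^'n^'n"
  assumes "inj En"
    and "density \<rho>"
  shows "(\<forall>E\<in>EPC. \<exists>w. is_min {Re (phi_plus_exp (E \<rho>)) / Re (phi_plus_exp (E \<tau>)) | \<tau>. passive_state En \<tau>} w)
    \<and> is_max {w. \<exists>E\<in>EPC. is_min {Re (phi_plus_exp (E \<rho>)) / Re (phi_plus_exp (E \<tau>)) | \<tau>. passive_state En \<tau>} w}
         (2 powr real_of_ereal (Rcoh_max En \<rho>))
    \<and> is_max {real CARD('n) * Re (phi_plus_exp (E \<rho>)) | E. E \<in> EPC}
         (2 powr real_of_ereal (Rcoh_max En \<rho>))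
    \<and> Rcoh_max En \<rho> \<noteq> \<infinity>"
proof -
  define S where "S = {Re (entry_sum (E \<rho>)) | E. E \<in> EPC}"
  have R: "Rcoh_max En \<rho> = ereal (log 2 (dom_trace \<rho>))"
    by (rule Rcoh_max_eq_log_dom_trace[OF assms])
  hence "2 powr real_of_ereal (Rcoh_max En \<rho>) = dom_trace \<rho>"
    using one_le_dom_trace[OF assms(2)] by simp
  moreover have "is_max S (dom_trace \<rho>)"
    unfolding S_def by (rule is_max_EPC_entry_sum[OF assms(2)])
  moreover have "{real CARD('n) * Re (phi_plus_exp (E \<rho>)) | E. E \<in> EPC} = S"
    unfolding S_def card_mult_Re_phi_plus_exp ..
  moreover have "{w. \<exists>E\<in>EPC. is_min {Re (phi_plus_exp (E \<rho>)) / Re (phi_plus_exp (E \<tau>)) | \<tau>.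
      passive_state En \<tau>} w} = S"
    unfolding S_def using passive_ratio_set[of _ \<rho> En] is_min_singleton_iff by auto
  ultimately show ?thesis
    using R passive_ratio_set[of _ \<rho> En] is_min_singleton_iff by auto
qed

end
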